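(* Let $G$ be a graph, let $A,B\subseteq V(G)$ be disjoint independent sets in $G$ each of size at least two, and let $v\in V(G)\setminus(A\cup B)$. Assume that every $a\in A$ has at least one neighbour and at least one non-neighbour in $B$, and every $b\in B$ has at least one neighbour and at least one non-neighbour in $A$. Then one can admissibly remove from $G$ a subset of $A\cup B\cup\{v\}$ which contains $v$ and contains at most two vertices of $A$ and at most two vertices of $B$.
   Context: Removing a set $T$ of vertices from a graph $G$ is a simple admissible removal if $T$ is an independent set in $G$ and the number of edges between $T$ and $V(G)\setminus T$ is even. Removing a (not necessarily independent) set of vertices is admissible if it can be realised by a sequence of simple admissible removals, each performed in the graph remaining after the previous ones. Degrees are always taken in the current remaining graph. *)

theory Defs
  imports Main
begin

text \<open>A (finite simple) graph is given by a vertex set V and a symmetric, irreflexive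
edge relation E; only edges with both ends in the current vertex set count.
Removing vertices means passing to the induced subgraph on the remaining vertices.\<close>

definition independent :: "'a set \<Rightarrow> ('a \<Rightarrow> 'a \<Rightarrow> bool) \<Rightarrow> 'a set \<Rightarrow> bool" where
  "independent V E T \<longleftrightarrow> T \<subseteq> V \<and> (\<forall>x\<in>T. \<forall>y\<in>T. \<not> E x y)"

definition simple_admissible :: "'a set \<Rightarrow> ('a \<Rightarrow> 'a \<Rightarrow> bool) \<Rightarrow> 'a set \<Rightarrow> bool" where
  "simple_admissible V E T \<longleftrightarrow>
     independent V E T \<and> even (card {(x, y). x \<in> T \<and> y \<in> V - T \<and> E x y})"

inductive admissible :: "'a set \<Rightarrow> ('a \<Rightarrow> 'a \<Rightarrow> bool) \<Rightarrow> 'a set \<Rightarrow> bool" where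
  adm_empty: "admissible V E {}"
| adm_step: "simple_admissible V E T \<Longrightarrow> admissible (V - T) E S \<Longrightarrow> admissible V E (T \<union> S)"

end

theory Submission
  imports Defs
begin

text \<open>Removing one vertex of even degree, or two non-adjacent vertices of odd total degree,
is a simple admissible removal, and removing a vertex flips the degree parity of exactly its
neighbours. If \<open>v\<close> has even degree, remove it. Otherwise call \<open>w\<close> good if it is adjacent to \<open>v\<close>
and of even degree, or non-adjacent to \<open>v\<close> and of odd degree: then \<open>w\<close> and \<open>v\<close> can be removed.
If some \<open>u \<in> A \<union> B\<close> is not good and not an odd-degree neighbour of \<open>v\<close>, it has even degree and
misses \<open>v\<close>; removing it leaves \<open>v\<close>'s parity alone and flips that of a neighbour \<open>w \<in> A \<union> B\<close>,
so \<open>w\<close> is good unless it already was. Otherwise every vertex of \<open>A \<union> B\<close> is an odd-degree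
neighbour of \<open>v\<close>; take \<open>b \<in> B\<close> adjacent to \<open>a\<^sub>1 \<in> A\<close> but not to \<open>a\<^sub>2 \<in> A\<close>. Removing
\<open>{a\<^sub>1, a\<^sub>2}\<close> keeps \<open>v\<close> odd and makes \<open>b\<close> good.\<close>

definition degree :: "'a set \<Rightarrow> ('a \<Rightarrow> 'a \<Rightarrow> bool) \<Rightarrow> 'a \<Rightarrow> nat" where
  "degree V E x = card {y\<in>V. E x y}"

lemma degree_Diff_adjacent:
  assumes "finite V" "u \<in> V" "E x u"
  shows "degree V E x = Suc (degree (V - {u}) E x)"
proof -
  have "{y\<in>V - {u}. E x y} = {y\<in>V. E x y} - {u}" by auto
  moreover have "u \<in> {y\<in>V. E x y}" "finite {y\<in>V. E x y}" using assms by auto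
  ultimately show ?thesis unfolding degree_def by (metis card_Suc_Diff1)
qed

lemma degree_Diff_nonadjacent: "\<not> E x u \<Longrightarrow> degree (V - {u}) E x = degree V E x"
  unfolding degree_def by (metis (mono_tags) Diff_iff singletonD)

lemma card_edges_from: "card {(a, b). a = x \<and> b \<in> V \<and> E a b} = degree V E x"
proof -
  have "{(a, b). a = x \<and> b \<in> V \<and> E a b} = Pair x ` {y\<in>V. E x y}" by auto
  then show ?thesis unfolding degree_def by (simp add: card_image inj_on_def)
qed

lemma admissible_if_simple_admissible: "simple_admissible V E T \<Longrightarrow> admissible V E T"
  using adm_step[of V E T "{}"] adm_empty[of "V - T" E] by simp

lemma card_le_2_if_subset_doubleton:
  assumes "X \<subseteq> {p, q}" shows "card X \<le> 2"
proof -
  have "card X \<le> card {p, q}" using assms by (intro card_mono) auto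
  also have "\<dots> \<le> 2" by (cases "p = q") auto
  finally show ?thesis .
qed

locale simple_graph =
  fixes E :: "'a \<Rightarrow> 'a \<Rightarrow> bool"
  assumes sym: "E x y \<Longrightarrow> E y x"
    and irrefl: "\<not> E x x"
begin

lemma simple_admissible_singleton:
  assumes "x \<in> V" "even (degree V E x)"
  shows "simple_admissible V E {x}"
proof -
  have "{(a, b). a \<in> {x} \<and> b \<in> V - {x} \<and> E a b} = {(a, b). a = x \<and> b \<in> V \<and> E a b}"
    using irrefl by auto
  then show ?thesis
    using assms irrefl card_edges_from[of x V E] unfolding simple_admissible_def independent_def
    by simp
qed

lemma simple_admissible_pair:
  assumes "finite V" "x \<in> V" "y \<in> V" "x \<noteq> y" "\<not> E x y"
    and "even (degree V E x + degree V E y)"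
  shows "simple_admissible V E {x, y}"
proof -
  let ?edges_from = "\<lambda>z. {(a, b). a = z \<and> b \<in> V \<and> E a b}"
  have "{(a, b). a \<in> {x, y} \<and> b \<in> V - {x, y} \<and> E a b} = ?edges_from x \<union> ?edges_from y"
    using assms(5) irrefl sym by auto
  moreover have "finite (?edges_from z)" for z
    by (rule finite_subset[of _ "{z} \<times> V"]) (auto simp: assms(1))
  then have "card (?edges_from x \<union> ?edges_from y) = degree V E x + degree V E y"
    using assms(4) by (subst card_Un_disjoint) (auto simp: card_edges_from)
  ultimately show ?thesis
    using assms irrefl sym unfolding simple_admissible_def independent_def by auto
qed

lemma admissible_pair_fixing_odd:
  assumes "finite V" "v \<in> V" "w \<in> V" "w \<noteq> v" "odd (degree V E v)"
    and good: "E w v \<longleftrightarrow> even (degree V E w)"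
  shows "admissible V E {w, v}"
proof (cases "E w v")
  case True
  then have "even (degree (V - {w}) E v)"
    using assms(5) degree_Diff_adjacent[where E = E, OF assms(1,3) sym[OF True]] by simp
  then have "admissible (V - {w}) E {v}"
    using assms(2,4) by (auto intro: admissible_if_simple_admissible simple_admissible_singleton)
  moreover have "simple_admissible V E {w}"
    using True good assms(3) by (simp add: simple_admissible_singleton)
  ultimately show ?thesis using adm_step by fastforce
next
  case False
  then have "simple_admissible V E {w, v}"
    using assms by (intro simple_admissible_pair) auto
  then show ?thesis by (rule admissible_if_simple_admissible)
qed

lemma admissible_triple:
  assumes "finite V" "u \<in> V" "v \<in> V" "w \<in> V" "w \<noteq> v" "odd (degree V E v)"
    and "even (degree V E u)" "\<not> E u v" "E u w"
    and "E w v \<longleftrightarrow> odd (degree V E w)"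
  shows "admissible V E {u, w, v}"
proof -
  have "degree V E w = Suc (degree (V - {u}) E w)"
    using degree_Diff_adjacent[where E = E, OF assms(1,2) sym[OF assms(9)]] .
  moreover have "degree (V - {u}) E v = degree V E v"
    using assms(8) sym by (blast intro: degree_Diff_nonadjacent)
  moreover have "u \<noteq> v" "u \<noteq> w" using assms(6,7,9) irrefl by auto
  ultimately have "admissible (V - {u}) E {w, v}"
    using assms by (intro admissible_pair_fixing_odd) auto
  moreover have "simple_admissible V E {u}"
    using assms(2,7) by (rule simple_admissible_singleton)
  ultimately show ?thesis using adm_step by fastforce
qed

lemma admissible_quadruple:
  assumes "finite V" "a\<^sub>1 \<in> V" "a\<^sub>2 \<in> V" "b \<in> V" "v \<in> V" "a\<^sub>2 \<noteq> b" "\<not> E a\<^sub>1 a\<^sub>2"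
    and "odd (degree V E a\<^sub>1)" "odd (degree V E a\<^sub>2)" "odd (degree V E b)" "odd (degree V E v)"
    and "E a\<^sub>1 v" "E a\<^sub>2 v" "E b v" "E b a\<^sub>1" "\<not> E b a\<^sub>2"
  shows "admissible V E {a\<^sub>1, a\<^sub>2, b, v}"
proof -
  let ?W = "V - {a\<^sub>1} - {a\<^sub>2}"
  have "a\<^sub>1 \<noteq> a\<^sub>2" using assms(15,16) by auto
  then have "degree V E v = Suc (Suc (degree ?W E v))"
    using assms(1-3,12,13) sym by (simp add: degree_Diff_adjacent)
  moreover have "degree V E b = Suc (degree ?W E b)"
    using assms(1,2,15,16) by (simp add: degree_Diff_adjacent degree_Diff_nonadjacent)
  moreover have "b \<notin> {a\<^sub>1, v}" "v \<notin> {a\<^sub>1, a\<^sub>2}" using assms(12-15) irrefl by auto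
  ultimately have "admissible ?W E {b, v}"
    using assms by (intro admissible_pair_fixing_odd) auto
  moreover have "simple_admissible V E {a\<^sub>1, a\<^sub>2}"
    using assms by (intro simple_admissible_pair) auto
  moreover have "V - {a\<^sub>1, a\<^sub>2} = ?W" by auto
  ultimately show ?thesis using adm_step by fastforce
qed

lemma exists_admissible_triple:
  assumes "finite V" "v \<in> V" "X \<subseteq> V" "v \<notin> X"
    and neighbour: "\<forall>u\<in>X. \<exists>w\<in>X. E u w"
    and "\<not> (odd (degree V E v) \<and> (\<forall>u\<in>X. odd (degree V E u) \<and> E u v))"
  shows "\<exists>p q. {p, q} \<subseteq> insert v X \<and> admissible V E {p, q, v}"
proof (cases "even (degree V E v)")
  case True
  then have "admissible V E {v, v, v}"
    using assms(2) by (auto intro: admissible_if_simple_admissible simple_admissible_singleton)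
  then show ?thesis by blast
next
  case odd: False
  then have pair: "admissible V E {w, w, v}" if "w \<in> X" "E w v \<longleftrightarrow> even (degree V E w)" for w
    using that assms(1-4) admissible_pair_fixing_odd[of V v w] by auto
  obtain u where u: "u \<in> X" "\<not> (odd (degree V E u) \<and> E u v)" using assms(6) odd by blast
  obtain w where w: "w \<in> X" "E u w" using neighbour u(1) by blast
  show ?thesis
  proof (cases "E u v \<longleftrightarrow> even (degree V E u)")
    case True
    then show ?thesis using pair u(1) by blast
  next
    case False
    have "admissible V E {u, w, v}" if "E w v \<longleftrightarrow> odd (degree V E w)"
      using that False u w assms(1-4) odd by (intro admissible_triple) auto
    then show ?thesis using pair[of w] u w by blast
  qed
qed

end

theorem mainTheorem7:
  fixes V :: "'a set" and E :: "'a \<Rightarrow> 'a \<Rightarrow> bool" and A B :: "'a set" and v :: 'a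
  assumes "finite V"
    and "\<forall>x y. E x y \<longrightarrow> E y x"
    and "\<forall>x. \<not> E x x"
    and "A \<inter> B = {}"
    and "independent V E A"
    and "independent V E B"
    and "card A \<ge> 2"
    and "card B \<ge> 2"
    and "v \<in> V - (A \<union> B)"
    and "\<forall>a\<in>A. (\<exists>b\<in>B. E a b) \<and> (\<exists>b\<in>B. \<not> E a b)"
    and "\<forall>b\<in>B. (\<exists>a\<in>A. E b a) \<and> (\<exists>a\<in>A. \<not> E b a)"
  shows "\<exists>S. S \<subseteq> A \<union> B \<union> {v} \<and> v \<in> S \<and> card (S \<inter> A) \<le> 2 \<and> card (S \<inter> B) \<le> 2
             \<and> admissible V E S"
proof -
  interpret simple_graph E using assms(2,3) by unfold_locales blast+
  have AB: "A \<union> B \<subseteq> V" "v \<in> V" "v \<notin> A \<union> B" using assms(5,6,9) by (auto simp: independent_def)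
  show ?thesis
  proof (cases "odd (degree V E v) \<and> (\<forall>u\<in>A \<union> B. odd (degree V E u) \<and> E u v)")
    case False
    moreover have "\<forall>u\<in>A \<union> B. \<exists>w\<in>A \<union> B. E u w" using assms(10,11) by blast
    ultimately obtain p q where pq: "{p, q} \<subseteq> insert v (A \<union> B)" "admissible V E {p, q, v}"
      using exists_admissible_triple[OF assms(1) AB(2,1,3)] by blast
    have "{p, q, v} \<inter> A \<subseteq> {p, q}" "{p, q, v} \<inter> B \<subseteq> {p, q}" using AB(3) by auto
    then show ?thesis using pq by (intro exI[of _ "{p, q, v}"]) (auto intro: card_le_2_if_subset_doubleton)
  next
    case True
    obtain b a\<^sub>1 a\<^sub>2 where b: "b \<in> B" "a\<^sub>1 \<in> A" "a\<^sub>2 \<in> A" "E b a\<^sub>1" "\<not> E b a\<^sub>2"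
      using assms(8,11) by (metis card.empty ex_in_conv not_numeral_le_zero)
    then have "admissible V E {a\<^sub>1, a\<^sub>2, b, v}"
      using True AB assms(1,4,5) sym by (intro admissible_quadruple) (auto simp: independent_def)
    moreover have "{a\<^sub>1, a\<^sub>2, b, v} \<inter> A \<subseteq> {a\<^sub>1, a\<^sub>2}" "{a\<^sub>1, a\<^sub>2, b, v} \<inter> B \<subseteq> {b, b}"
      using AB(3) b(1-3) assms(4) by auto
    ultimately show ?thesis using b by (intro exI[of _ "{a\<^sub>1, a\<^sub>2, b, v}"])
      (auto intro: card_le_2_if_subset_doubleton)
  qed
qed

end
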